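(* Let $0<a_1<a_2<\cdots<a_n$ be task lengths and $A_{i:n}:=a_i+\cdots+a_n$. Let the disruption intensity be $\lambda(t)=\bar\lambda f(t)$ with $\bar\lambda>0$ and $f$ a positive differentiable function on $[0,\infty)$ with $f_-:=\inf_{t\ge0}f(t)>0$ and $f_+:=\sup_{t\ge0}f(t)<\infty$. Assume $\bar\lambda\le\frac{1}{2f_+a_n}$. Then for every $t\ge0$ and $i=1,\dots,n$, $$A_{i:n}\le M_{i:n}(t)\le A_{i:n}+\bar\lambda f_+(a_i^2+\cdots+a_n^2).$$ In particular, $M_{i:n}(t)\le\frac32A_{i:n}$.
   Context: Model: a single machine processes a finite batch of tasks one at a time in a fixed order. A task of length $c>0$ requires $c$ units of uninterrupted processing. Disruptions occur at the points of a non-homogeneous Poisson process on $[0,\infty)$ with intensity function $\lambda(t)$. If a disruption occurs while a task is being processed, all work on it is lost and that task is restarted from scratch at the disruption time (no repair time); a task is completed once it has been processed for $c$ consecutive time units with no disruption, and the machine then immediately starts the next task. $M_{i:n}(t)$ denotes the expected time, measured from $t$, to complete the tasks $a_i,a_{i+1},\dots,a_n$ in this order when processing of $a_i$ starts at time $t$. *)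

theory Defs
  imports "HOL-Analysis.Analysis"
begin

definition cum_int :: "(real \<Rightarrow> real) \<Rightarrow> real \<Rightarrow> real \<Rightarrow> real" where
  "cum_int lam t s = integral {t..s} lam"

text \<open>One-step (Bellman / first-event) operator of the Markov chain of
  (current task index, start time of current attempt).  From state (i,t) with
  c = a i: with probability exp(-Lambda(t,t+c)) no disruption occurs, the task
  completes at t+c and the chain moves to (i+1, t+c) at cost c; otherwise the
  first disruption occurs at s in (t,t+c) with density lam s * exp(-Lambda(t,s)),
  the task restarts, the chain moves to (i, s) at cost s - t.\<close>
definition restart_op ::
  "(real \<Rightarrow> real) \<Rightarrow> (nat \<Rightarrow> real) \<Rightarrow> nat \<Rightarrow>
   (nat \<Rightarrow> real \<Rightarrow> ennreal) \<Rightarrow> (nat \<Rightarrow> real \<Rightarrow> ennreal)" where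
  "restart_op lam a n F = (\<lambda>i t.
     if i \<le> n then
       ennreal (exp (- cum_int lam t (t + a i))) * (ennreal (a i) + F (Suc i) (t + a i))
       + (\<integral>\<^sup>+ s. indicator {t<..<t + a i} s
              * ennreal (lam s * exp (- cum_int lam t s))
              * (ennreal (s - t) + F i s) \<partial>lborel)
     else 0)"

text \<open>M lam a n i t: expected time, measured from t, to complete tasks
  a i, ..., a n in order when processing of a i starts at t.  Defined as the
  expected total (nonnegative) cost of the above chain, i.e. the least fixed
  point of the one-step operator.\<close>
definition exp_completion ::
  "(real \<Rightarrow> real) \<Rightarrow> (nat \<Rightarrow> real) \<Rightarrow> nat \<Rightarrow> nat \<Rightarrow> real \<Rightarrow> ennreal" where
  "exp_completion lam a n i t = lfp (restart_op lam a n) i t"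

end

theory Submission
  imports Defs
begin

text \<open>
  The expected completion time is the least fixed point of the first-event operator, so an
  upper bound follows from exhibiting a pre-fixed point and a lower bound from showing that
  every pre-fixed point dominates it.  If the intensity is at most L, an attempt at a task of
  length c succeeds with probability p \<ge> exp (-L c) \<ge> 1 - L c \<ge> 1/2, and the expected
  time lost to a failed attempt is at most the integral of L u over [0, c], i.e. L c^2 / 2.  Hence
  the time-independent bound \<Sum> (a j + L (a j)^2) survives one application of the
  operator.  Conversely, by backward induction on i, a pre-fixed point F satisfies
  F i t \<ge> p (a i + A) + (1 - p) m, where A bounds the remaining tasks and m is the
  infimum of F i; as p \<ge> exp (-L a i) > 0 uniformly in t, this forces m \<ge> a i + A.
\<close>

lemma le_of_increasing_on_interval:
  fixes a :: "nat \<Rightarrow> 'a::order"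
  assumes incr: "\<And>j. 1 \<le> j \<Longrightarrow> j < n \<Longrightarrow> a j < a (Suc j)"
    and "1 \<le> j" "j \<le> k" "k \<le> n"
  shows "a j \<le> a k"
  using assms(3,4)
proof (induction k rule: dec_induct)
  case (step m)
  then show ?case using incr[of m] \<open>1 \<le> j\<close> by fastforce
qed simp

lemma mult_sum_squares_le_half_sum:
  fixes a :: "'a \<Rightarrow> real"
  assumes "\<And>j. j \<in> S \<Longrightarrow> 0 \<le> a j" and "\<And>j. j \<in> S \<Longrightarrow> c * a j \<le> 1/2"
  shows "c * (\<Sum>j\<in>S. (a j)\<^sup>2) \<le> 1/2 * (\<Sum>j\<in>S. a j)"
  unfolding sum_distrib_left
proof (rule sum_mono)
  fix j assume "j \<in> S"
  then have "c * a j * a j \<le> 1/2 * a j" using assms by (intro mult_right_mono) auto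
  then show "c * (a j)\<^sup>2 \<le> 1/2 * a j" by (simp add: power2_eq_square mult.assoc)
qed

lemma has_integral_elapsed:
  fixes t c :: real
  assumes "0 \<le> c"
  shows "((\<lambda>s. s - t) has_integral c\<^sup>2 / 2) {t..t + c}"
proof -
  have "((\<lambda>s. s - t) has_integral ((t + c - t)\<^sup>2 / 2 - (t - t)\<^sup>2 / 2)) {t..t + c}"
  proof (rule fundamental_theorem_of_calculus)
    fix x :: real
    have "((\<lambda>s. (s - t)\<^sup>2 / 2) has_real_derivative x - t) (at x within {t..t + c})"
      by (auto intro!: derivative_eq_intros)
    then show "((\<lambda>s. (s - t)\<^sup>2 / 2) has_vector_derivative x - t) (at x within {t..t + c})"
      by (simp add: has_real_derivative_iff_has_vector_derivative)
  qed (use assms in simp)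
  then show ?thesis by simp
qed

lemma nn_integral_open_interval_has_integral:
  fixes h :: "real \<Rightarrow> real"
  assumes "\<And>s. s \<in> {t<..<u} \<Longrightarrow> 0 \<le> h s" and "(h has_integral I) {t..u}"
  shows "(\<integral>\<^sup>+ s. indicator {t<..<u} s * ennreal (h s) \<partial>lborel) = ennreal I"
proof -
  have "(h has_integral I) {t<..<u}"
    using assms(2) has_integral_open_interval[of h I t u] by (simp add: box_real)
  from nn_integral_has_integral_lebesgue'[OF assms(1) this] show ?thesis
    by (simp add: mult.commute)
qed

lemma ennreal_le_by_gap_contraction:
  fixes H :: "real \<Rightarrow> ennreal"
  assumes \<delta>: "0 < \<delta>"
    and improve: "\<And>r t. 0 \<le> r \<Longrightarrow> r < A \<Longrightarrow> (\<And>s. 0 \<le> s \<Longrightarrow> ennreal r \<le> H s)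
        \<Longrightarrow> 0 \<le> t \<Longrightarrow> ennreal (r + \<delta> * (A - r)) \<le> H t"
    and t: "0 \<le> t"
  shows "ennreal A \<le> H t"
proof -
  define m where "m = (INF s\<in>{0..}. H s)"
  have m_le: "\<And>s. 0 \<le> s \<Longrightarrow> m \<le> H s" unfolding m_def by (rule INF_lower) simp
  have "ennreal A \<le> m"
  proof (rule ccontr)
    assume "\<not> ennreal A \<le> m"
    then obtain r where r: "0 \<le> r" "m = ennreal r" "r < A"
      by (cases m) (auto simp: ennreal_less_iff)
    have "ennreal (r + \<delta> * (A - r)) \<le> m"
      unfolding m_def by (rule INF_greatest) (use improve r m_le in auto)
    then have "r + \<delta> * (A - r) \<le> r" using r by simp
    moreover have "0 < \<delta> * (A - r)" using \<delta> r by simp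
    ultimately show False by simp
  qed
  then show ?thesis using m_le[OF t] by simp
qed

locale bounded_intensity =
  fixes lam :: "real \<Rightarrow> real" and L :: real
  assumes continuous: "continuous_on {0..} lam"
    and nonneg: "\<And>s. 0 \<le> s \<Longrightarrow> 0 \<le> lam s"
    and bounded: "\<And>s. 0 \<le> s \<Longrightarrow> lam s \<le> L"
begin

abbreviation survival :: "real \<Rightarrow> real \<Rightarrow> real" where
  "survival t s \<equiv> exp (- cum_int lam t s)"

abbreviation disruption_density :: "real \<Rightarrow> real \<Rightarrow> real" where
  "disruption_density t s \<equiv> lam s * survival t s"

lemma L_nonneg: "0 \<le> L"
  using nonneg[of 0] bounded[of 0] by simp

lemma continuous_on_interval: "0 \<le> t \<Longrightarrow> continuous_on {t..u} lam"
  by (rule continuous_on_subset[OF continuous]) auto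

lemma cum_int_nonneg:
  assumes "0 \<le> t"
  shows "0 \<le> cum_int lam t s"
  unfolding cum_int_def
  by (rule integral_nonneg[OF integrable_continuous_interval[OF continuous_on_interval[OF assms]]])
     (use nonneg assms in auto)

lemma cum_int_le:
  assumes "0 \<le> t" "t \<le> s"
  shows "cum_int lam t s \<le> L * (s - t)"
proof -
  have "integral {t..s} lam \<le> integral {t..s} (\<lambda>_. L)"
    by (rule integral_le[OF integrable_continuous_interval[OF continuous_on_interval]])
       (use bounded assms in auto)
  then show ?thesis using assms(2) by (simp add: cum_int_def mult.commute)
qed

lemma survival_le_1: "0 \<le> t \<Longrightarrow> survival t s \<le> 1"
  using cum_int_nonneg by simp

lemma survival_ge:
  assumes "0 \<le> t" "0 \<le> c"
  shows "exp (- (L * c)) \<le> survival t (t + c)"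
  using cum_int_le[of t "t + c"] assms by simp

lemma disruption_density_nonneg: "0 \<le> t \<Longrightarrow> t \<le> s \<Longrightarrow> 0 \<le> disruption_density t s"
  using nonneg by simp

lemma disruption_density_le:
  assumes "0 \<le> t" "t \<le> s"
  shows "disruption_density t s \<le> L"
proof -
  have "disruption_density t s \<le> lam s * 1"
    using nonneg[of s] survival_le_1[OF assms(1)] assms by (intro mult_left_mono) auto
  then show ?thesis using bounded[of s] assms by simp
qed

lemma continuous_on_disruption_density:
  assumes "0 \<le> t"
  shows "continuous_on {t..u} (disruption_density t)"
proof -
  have "continuous_on {t..u} (\<lambda>s. integral {t..s} lam)"
    by (rule indefinite_integral_continuous_1
        [OF integrable_continuous_interval[OF continuous_on_interval[OF assms]]])
  then show ?thesis unfolding cum_int_def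
    by (intro continuous_intros continuous_on_interval assms)
qed

lemma disruption_density_has_integral:
  assumes "0 \<le> t" "0 \<le> c"
  shows "(disruption_density t has_integral (1 - survival t (t + c))) {t..t + c}"
proof -
  have "(disruption_density t has_integral (- survival t (t + c)) - (- survival t t)) {t..t + c}"
  proof (rule fundamental_theorem_of_calculus)
    fix x assume x: "x \<in> {t..t + c}"
    have "((\<lambda>u. cum_int lam t u) has_real_derivative lam x) (at x within {t..t + c})"
      using integral_has_vector_derivative[OF continuous_on_interval[OF assms(1)] x]
      by (simp add: cum_int_def has_real_derivative_iff_has_vector_derivative)
    then have "((\<lambda>u. - survival t u) has_real_derivative disruption_density t x)
        (at x within {t..t + c})"
      by (auto intro!: derivative_eq_intros)
    then show "((\<lambda>u. - survival t u) has_vector_derivative disruption_density t x)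
        (at x within {t..t + c})"
      by (simp add: has_real_derivative_iff_has_vector_derivative)
  qed (use assms in simp)
  then show ?thesis by (simp add: cum_int_def)
qed

lemma elapsed_disruption_density_integral:
  assumes "0 \<le> t" "0 \<le> c"
  obtains I where "((\<lambda>s. disruption_density t s * (s - t)) has_integral I) {t..t + c}"
    and "0 \<le> I" and "I \<le> L * c\<^sup>2 / 2"
proof
  let ?I = "integral {t..t + c} (\<lambda>s. disruption_density t s * (s - t))"
  have "continuous_on {t..t + c} (\<lambda>s. disruption_density t s * (s - t))"
    by (intro continuous_intros continuous_on_disruption_density assms)
  then show I: "((\<lambda>s. disruption_density t s * (s - t)) has_integral ?I) {t..t + c}"
    by (intro integrable_integral integrable_continuous_interval)
  show "0 \<le> ?I"
    by (rule has_integral_nonneg[OF I]) (use assms disruption_density_nonneg in auto)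
  have "((\<lambda>s. L * (s - t)) has_integral L * c\<^sup>2 / 2) {t..t + c}"
    using has_integral_mult_right[OF has_integral_elapsed[OF assms(2)], of L] by simp
  then show "?I \<le> L * c\<^sup>2 / 2"
    by (rule has_integral_le[OF I])
       (use assms disruption_density_le in \<open>auto intro!: mult_right_mono\<close>)
qed

abbreviation failed_attempt_cost :: "real \<Rightarrow> real \<Rightarrow> (real \<Rightarrow> ennreal) \<Rightarrow> ennreal" where
  "failed_attempt_cost t c H \<equiv>
     \<integral>\<^sup>+ s. indicator {t<..<t + c} s * ennreal (disruption_density t s)
       * (ennreal (s - t) + H s) \<partial>lborel"

lemma failed_attempt_cost_const:
  assumes t: "0 \<le> t" and c: "0 \<le> c" and K: "0 \<le> K" and H: "\<And>s. 0 \<le> s \<Longrightarrow> H s = ennreal K"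
    and I: "((\<lambda>s. disruption_density t s * (s - t)) has_integral I) {t..t + c}"
  shows "failed_attempt_cost t c H = ennreal (I + K * (1 - survival t (t + c)))"
proof -
  have "failed_attempt_cost t c H
      = (\<integral>\<^sup>+ s. indicator {t<..<t + c} s
          * ennreal (disruption_density t s * (s - t) + K * disruption_density t s) \<partial>lborel)"
  proof (rule nn_integral_cong)
    fix s
    show "indicator {t<..<t + c} s * ennreal (disruption_density t s) * (ennreal (s - t) + H s)
      = indicator {t<..<t + c} s
          * ennreal (disruption_density t s * (s - t) + K * disruption_density t s)"
    proof (cases "s \<in> {t<..<t + c}")
      case True
      then have s: "t \<le> s" "0 \<le> s" using t by auto
      have "ennreal (disruption_density t s) * (ennreal (s - t) + H s)
          = ennreal (disruption_density t s * (s - t + K))"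
        using H[OF s(2)] s K disruption_density_nonneg[OF t s(1)]
        by (simp add: ennreal_plus ennreal_mult)
      also have "\<dots> = ennreal (disruption_density t s * (s - t) + K * disruption_density t s)"
        by (rule arg_cong[where f = ennreal]) (simp add: algebra_simps)
      finally show ?thesis using True by simp
    qed simp
  qed
  also have "\<dots> = ennreal (I + K * (1 - survival t (t + c)))"
    using I disruption_density_has_integral[OF t c] t K disruption_density_nonneg[OF t]
    by (intro nn_integral_open_interval_has_integral has_integral_add has_integral_mult_right)
       auto
  finally show ?thesis .
qed

lemma failed_attempt_cost_ge:
  assumes t: "0 \<le> t" and c: "0 \<le> c" and r: "0 \<le> r"
    and H: "\<And>s. 0 \<le> s \<Longrightarrow> ennreal r \<le> H s"
  shows "ennreal (r * (1 - survival t (t + c))) \<le> failed_attempt_cost t c H"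
proof -
  have "ennreal (r * (1 - survival t (t + c)))
      = (\<integral>\<^sup>+ s. indicator {t<..<t + c} s * ennreal (r * disruption_density t s) \<partial>lborel)"
    using t r disruption_density_nonneg[OF t] disruption_density_has_integral[OF t c]
    by (intro nn_integral_open_interval_has_integral[symmetric] has_integral_mult_right) auto
  also have "\<dots> \<le> failed_attempt_cost t c H"
  proof (rule nn_integral_mono)
    fix s
    show "indicator {t<..<t + c} s * ennreal (r * disruption_density t s)
      \<le> indicator {t<..<t + c} s * ennreal (disruption_density t s) * (ennreal (s - t) + H s)"
    proof (cases "s \<in> {t<..<t + c}")
      case True
      then have s: "t \<le> s" "0 \<le> s" using t by auto
      have "ennreal (r * disruption_density t s) = ennreal (disruption_density t s) * ennreal r"
        using r disruption_density_nonneg[OF t s(1)] by (simp add: ennreal_mult mult.commute)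
      also have "\<dots> \<le> ennreal (disruption_density t s) * (ennreal (s - t) + H s)"
        by (intro mult_left_mono order.trans[OF H[OF s(2)]]) auto
      finally show ?thesis using True by (simp add: mult.assoc)
    qed simp
  qed
  finally show ?thesis .
qed

lemma survival_ge_half:
  assumes "0 \<le> t" "0 \<le> c" "L * c \<le> 1/2"
  shows "1/2 \<le> survival t (t + c)"
proof -
  have "1/2 \<le> 1 - L * c" using assms(3) by simp
  also have "\<dots> \<le> exp (- (L * c))" using exp_ge_add_one_self[of "- (L * c)"] by simp
  also have "\<dots> \<le> survival t (t + c)" using survival_ge assms(1,2) by simp
  finally show ?thesis .
qed

lemma restart_step_upper:
  fixes H :: "real \<Rightarrow> ennreal"
  assumes t: "0 \<le> t" and c: "0 < c" and small: "L * c \<le> 1/2" and B: "0 \<le> B"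
    and H: "\<And>s. 0 \<le> s \<Longrightarrow> H s = ennreal (c + L * c\<^sup>2 + B)"
  shows "ennreal (survival t (t + c)) * (ennreal c + ennreal B) + failed_attempt_cost t c H
     \<le> ennreal (c + L * c\<^sup>2 + B)"
proof -
  define K where "K = c + L * c\<^sup>2 + B"
  define p where "p = survival t (t + c)"
  obtain I where I: "((\<lambda>s. disruption_density t s * (s - t)) has_integral I) {t..t + c}"
    and I_nonneg: "0 \<le> I" and I_le: "I \<le> L * c\<^sup>2 / 2"
    using elapsed_disruption_density_integral t c by (metis less_imp_le)
  have K_nonneg: "0 \<le> K" using c L_nonneg B by (simp add: K_def)
  have p_half: "1/2 \<le> p" unfolding p_def using survival_ge_half t c small by simp
  have p_le_1: "p \<le> 1" unfolding p_def using survival_le_1 t by simp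
  have "ennreal p * (ennreal c + ennreal B) + failed_attempt_cost t c H
      = ennreal (p * (c + B) + (I + K * (1 - p)))"
    using failed_attempt_cost_const[OF t _ K_nonneg _ I] H c B I_nonneg K_nonneg p_le_1
    by (simp add: K_def p_def ennreal_plus ennreal_mult)
  also have "\<dots> \<le> ennreal K"
  proof (rule ennreal_leI)
    have "L * c\<^sup>2 / 2 \<le> p * (L * c\<^sup>2)"
      using mult_right_mono[OF p_half, of "L * c\<^sup>2"] L_nonneg by simp
    then show "p * (c + B) + (I + K * (1 - p)) \<le> K"
      using I_le by (simp add: K_def algebra_simps)
  qed
  finally show ?thesis unfolding K_def p_def .
qed

lemma restart_step_lower:
  fixes H :: "real \<Rightarrow> ennreal"
  assumes t: "0 \<le> t" and c: "0 < c" and r: "0 \<le> r" "r \<le> c + A"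
    and A: "0 \<le> A" "ennreal A \<le> B" and H: "\<And>s. 0 \<le> s \<Longrightarrow> ennreal r \<le> H s"
  shows "ennreal (r + exp (- (L * c)) * (c + A - r))
    \<le> ennreal (survival t (t + c)) * (ennreal c + B) + failed_attempt_cost t c H"
proof -
  define p where "p = survival t (t + c)"
  have p_le_1: "p \<le> 1" unfolding p_def using survival_le_1 t by simp
  have "r + exp (- (L * c)) * (c + A - r) \<le> r + p * (c + A - r)"
    unfolding p_def using survival_ge[of t c] t c r by (intro add_left_mono mult_right_mono) auto
  also have "\<dots> = p * (c + A) + r * (1 - p)" by (simp add: algebra_simps)
  finally have "ennreal (r + exp (- (L * c)) * (c + A - r)) \<le> ennreal (p * (c + A) + r * (1 - p))"
    by (rule ennreal_leI)
  also have "\<dots> = ennreal p * (ennreal c + ennreal A) + ennreal (r * (1 - p))"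
    using c A r p_le_1 by (simp add: p_def ennreal_plus ennreal_mult)
  also have "\<dots> \<le> ennreal p * (ennreal c + B) + failed_attempt_cost t c H"
    using A failed_attempt_cost_ge[OF t _ r(1) H] c
    by (intro add_mono mult_left_mono) (auto simp: p_def)
  finally show ?thesis unfolding p_def .
qed

lemma pre_fixed_point_ge:
  assumes a_pos: "\<And>j. 1 \<le> j \<Longrightarrow> j \<le> n \<Longrightarrow> 0 < a j"
    and pre: "restart_op lam a n F \<le> F"
    and i: "1 \<le> i" "i \<le> Suc n" and t: "0 \<le> t"
  shows "ennreal (\<Sum>j=i..n. a j) \<le> F i t"
  using i(2) t
proof (induction i arbitrary: t rule: inc_induct)
  case (step k)
  define A where "A = (\<Sum>j=Suc k..n. a j)"
  have k: "1 \<le> k" "k \<le> n" using i(1) step.hyps by auto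
  have c: "0 < a k" using a_pos k by simp
  have A: "0 \<le> A" unfolding A_def using a_pos by (intro sum_nonneg) (simp add: less_imp_le)
  have "ennreal (a k + A) \<le> F k t"
  proof (rule ennreal_le_by_gap_contraction[of "exp (- (L * a k))"])
    fix r u :: real
    assume r: "0 \<le> r" "r < a k + A" and lower: "\<And>s. 0 \<le> s \<Longrightarrow> ennreal r \<le> F k s"
      and u: "0 \<le> u"
    have "ennreal (r + exp (- (L * a k)) * (a k + A - r)) \<le> restart_op lam a n F k u"
      unfolding restart_op_def if_P[OF k(2)]
      by (rule restart_step_lower[OF u c r(1) _ A])
         (use r u c lower step.IH in \<open>auto simp: A_def\<close>)
    also have "\<dots> \<le> F k u" using pre by (simp add: le_fun_def)
    finally show "ennreal (r + exp (- (L * a k)) * (a k + A - r)) \<le> F k u" .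
  qed (use step.prems in auto)
  then show ?case using k by (simp add: A_def sum.atLeast_Suc_atMost)
qed simp

lemma exp_completion_ge:
  assumes a_pos: "\<And>j. 1 \<le> j \<Longrightarrow> j \<le> n \<Longrightarrow> 0 < a j"
    and i: "1 \<le> i" "i \<le> n" and t: "0 \<le> t"
  shows "ennreal (\<Sum>j=i..n. a j) \<le> exp_completion lam a n i t"
proof -
  have "ennreal (\<Sum>j=i..n. a j) \<le> F i t" if "restart_op lam a n F \<le> F" for F
    using pre_fixed_point_ge[OF a_pos that i(1) _ t] i(2) by simp
  then show ?thesis
    unfolding exp_completion_def lfp_def by (auto simp: Inf_apply intro!: INF_greatest)
qed

lemma exp_completion_le:
  assumes a_pos: "\<And>j. 1 \<le> j \<Longrightarrow> j \<le> n \<Longrightarrow> 0 < a j"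
    and small: "\<And>j. 1 \<le> j \<Longrightarrow> j \<le> n \<Longrightarrow> L * a j \<le> 1/2"
    and i: "1 \<le> i" and t: "0 \<le> t"
  shows "exp_completion lam a n i t \<le> ennreal ((\<Sum>j=i..n. a j) + L * (\<Sum>j=i..n. (a j)\<^sup>2))"
proof -
  define B where "B i = (\<Sum>j=i..n. a j + L * (a j)\<^sup>2)" for i
  define G where "G i t = (if 1 \<le> i \<and> 0 \<le> t then ennreal (B i) else top)" for i and t :: real
  have B_nonneg: "0 \<le> B i" if "1 \<le> i" for i
    unfolding B_def using a_pos L_nonneg that by (intro sum_nonneg) (simp add: less_imp_le)
  have "restart_op lam a n G i t \<le> G i t" for i t
  proof (cases "1 \<le> i \<and> i \<le> n \<and> 0 \<le> t")
    case True
    then have i: "1 \<le> i" "i \<le> n" and t: "0 \<le> t" by auto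
    have B_split: "B i = a i + L * (a i)\<^sup>2 + B (Suc i)"
      unfolding B_def using i by (simp add: sum.atLeast_Suc_atMost)
    have G_next: "G (Suc i) (t + a i) = ennreal (B (Suc i))"
      using t a_pos[OF i] by (simp add: G_def)
    have "restart_op lam a n G i t \<le> ennreal (B i)"
      unfolding restart_op_def if_P[OF i(2)] G_next B_split
      by (rule restart_step_upper) (use i t a_pos small B_nonneg in \<open>auto simp: G_def B_split\<close>)
    then show ?thesis using i t by (simp add: G_def)
  qed (auto simp: restart_op_def G_def)
  then have "exp_completion lam a n \<le> G"
    unfolding exp_completion_def by (intro lfp_lowerbound le_funI)
  then have "exp_completion lam a n i t \<le> G i t" by (simp add: le_fun_def)
  then have "exp_completion lam a n i t \<le> ennreal (B i)" using i t by (simp add: G_def)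
  then show ?thesis by (simp add: B_def sum.distrib sum_distrib_left)
qed

end

theorem lemma4:
  fixes a :: "nat \<Rightarrow> real" and n :: nat and lbar :: real and f :: "real \<Rightarrow> real"
  assumes a_pos: "0 < a 1"
    and a_incr: "\<And>j. 1 \<le> j \<Longrightarrow> j < n \<Longrightarrow> a j < a (Suc j)"
    and lbar_pos: "0 < lbar"
    and f_pos: "\<And>t. 0 \<le> t \<Longrightarrow> 0 < f t"
    and f_diff: "\<And>t. 0 \<le> t \<Longrightarrow> f differentiable (at t within {0..})"
    and f_inf: "(INF t\<in>{0..}. f t) > 0"
    and f_bdd: "bdd_above (f ` {0..})"
    and lbar_small: "lbar \<le> 1 / (2 * (SUP t\<in>{0..}. f t) * a n)"
    and t_nonneg: "0 \<le> t"
    and i_range: "1 \<le> i" "i \<le> n"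
  shows "ennreal (\<Sum>j=i..n. a j) \<le> exp_completion (\<lambda>s. lbar * f s) a n i t
       \<and> exp_completion (\<lambda>s. lbar * f s) a n i t
           \<le> ennreal ((\<Sum>j=i..n. a j) + lbar * (SUP t\<in>{0..}. f t) * (\<Sum>j=i..n. (a j)\<^sup>2))
       \<and> exp_completion (\<lambda>s. lbar * f s) a n i t \<le> ennreal (3/2 * (\<Sum>j=i..n. a j))"
proof -
  \<comment> \<open>Only the supremum of f enters the bounds.\<close>
  define fs where "fs = (SUP t\<in>{0..}. f t)"
  have f_le: "\<And>s. 0 \<le> s \<Longrightarrow> f s \<le> fs" unfolding fs_def by (rule cSUP_upper[OF _ f_bdd]) simp
  have "continuous_on {0..} f"
    using f_diff differentiable_imp_continuous_within
    by (auto simp: continuous_on_eq_continuous_within)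
  then interpret bounded_intensity "\<lambda>s. lbar * f s" "lbar * fs"
    using f_pos f_le lbar_pos by unfold_locales (auto intro!: continuous_intros less_imp_le)
  have a_bounds: "0 < a j \<and> a j \<le> a n" if "1 \<le> j" "j \<le> n" for j
    using le_of_increasing_on_interval[where a = a and n = n, OF a_incr] that a_pos by force
  have "lbar * fs * a n \<le> 1/2"
    using lbar_small f_pos[of 0] f_le[of 0] a_bounds[of n] i_range
    by (simp add: fs_def[symmetric] pos_le_divide_eq mult.assoc)
  then have small: "lbar * fs * a j \<le> 1/2" if "1 \<le> j" "j \<le> n" for j
    using mult_left_mono[of "a j" "a n" "lbar * fs"] a_bounds[OF that] L_nonneg by simp
  have "lbar * fs * (\<Sum>j=i..n. (a j)\<^sup>2) \<le> 1/2 * (\<Sum>j=i..n. a j)"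
    using a_bounds small i_range by (intro mult_sum_squares_le_half_sum) (auto intro: less_imp_le)
  then have "ennreal ((\<Sum>j=i..n. a j) + lbar * fs * (\<Sum>j=i..n. (a j)\<^sup>2))
      \<le> ennreal (3/2 * (\<Sum>j=i..n. a j))"
    by (intro ennreal_leI) simp
  then show ?thesis
    using exp_completion_ge[where a = a and n = n, OF _ i_range t_nonneg]
      exp_completion_le[where a = a and n = n, OF _ small i_range(1) t_nonneg] a_bounds
    unfolding fs_def[symmetric] by (auto intro: order.trans)
qed

end
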